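(* There exist positive bounded operators $A,B\colon\ell^2\to\ell^2$ such that $AB-BA=I+N$, where $N$ is a nilpotent operator of nil-index $3$ (i.e. $N^3=0$ and $N^2\neq0$). Furthermore, there is an absolute constant $K>0$ such that for every $\varepsilon\in(0,1)$ the operators $A$, $B$ (positive, with $AB-BA=I+N$ and $N$ nilpotent of nil-index $3$) can be chosen so that $\|A\|\leq K\varepsilon^{-3}$, $\|B\|\leq K\varepsilon^{-3}$ and $\|N\|\leq K\varepsilon$.
   Context: $\ell^2$ is the real Hilbert lattice of square-summable sequences with the coordinatewise order; an operator on $\ell^2$ is positive if it maps nonnegative sequences to nonnegative sequences. $I$ is the identity operator and $\|\cdot\|$ the operator norm. *)

theory Defs
  imports Complex_Main
begin

text \<open>Operators on l2 are
  functions (nat => real) => (nat => real); only their behaviour on l2 matters.\<close>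

definition l2 :: "(nat \<Rightarrow> real) set" where
  "l2 = {x. summable (\<lambda>n. (x n)\<^sup>2)}"

definition l2_norm :: "(nat \<Rightarrow> real) \<Rightarrow> real" where
  "l2_norm x = sqrt (\<Sum>n. (x n)\<^sup>2)"

definition bounded_op :: "((nat \<Rightarrow> real) \<Rightarrow> (nat \<Rightarrow> real)) \<Rightarrow> bool" where
  "bounded_op T \<longleftrightarrow>
     (\<forall>x\<in>l2. T x \<in> l2) \<and>
     (\<forall>x\<in>l2. \<forall>y\<in>l2. T (\<lambda>n. x n + y n) = (\<lambda>n. T x n + T y n)) \<and>
     (\<forall>x\<in>l2. \<forall>c::real. T (\<lambda>n. c * x n) = (\<lambda>n. c * T x n)) \<and>
     (\<exists>C. \<forall>x\<in>l2. l2_norm (T x) \<le> C * l2_norm x)"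

definition op_norm :: "((nat \<Rightarrow> real) \<Rightarrow> (nat \<Rightarrow> real)) \<Rightarrow> real" where
  "op_norm T = Sup {l2_norm (T x) | x. x \<in> l2 \<and> l2_norm x \<le> 1}"

definition positive_op :: "((nat \<Rightarrow> real) \<Rightarrow> (nat \<Rightarrow> real)) \<Rightarrow> bool" where
  "positive_op T \<longleftrightarrow> (\<forall>x\<in>l2. (\<forall>n. 0 \<le> x n) \<longrightarrow> (\<forall>n. 0 \<le> T x n))"

definition nil_index3 :: "((nat \<Rightarrow> real) \<Rightarrow> (nat \<Rightarrow> real)) \<Rightarrow> bool" where
  "nil_index3 N \<longleftrightarrow> (\<forall>x\<in>l2. (\<forall>n. N (N (N x)) n = 0)) \<and> (\<exists>x\<in>l2. \<exists>n. N (N x) n \<noteq> 0)"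

definition commutator_eq ::
  "((nat \<Rightarrow> real) \<Rightarrow> (nat \<Rightarrow> real)) \<Rightarrow> ((nat \<Rightarrow> real) \<Rightarrow> (nat \<Rightarrow> real))
   \<Rightarrow> ((nat \<Rightarrow> real) \<Rightarrow> (nat \<Rightarrow> real)) \<Rightarrow> bool" where
  "commutator_eq A B N \<longleftrightarrow> (\<forall>x\<in>l2. \<forall>n. A (B x) n - B (A x) n = x n + N x n)"

end

theory Submission
  imports Defs "HOL-Analysis.L2_Norm"
begin

text \<open>
  Read coordinate \<open>2p + r\<close> (\<open>r < 2\<close>) of \<open>x\<close> as component \<open>r\<close> of the \<open>p\<close>-th block, i.e.
  \<open>\<ell>\<^sup>2 = \<ell>\<^sup>2 \<otimes> \<real>\<^sup>2\<close>, and let \<open>S\<^sub>0, S\<^sub>1\<close> be the isometries \<open>e\<^sub>p \<mapsto> e\<^sub>2\<^sub>p, e\<^sub>2\<^sub>p\<^sub>+\<^sub>1\<close>, so that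
  \<open>S\<^sub>i\<^sup>* S\<^sub>j = \<delta>\<^sub>i\<^sub>j I\<close> and \<open>S\<^sub>0 S\<^sub>0\<^sup>* + S\<^sub>1 S\<^sub>1\<^sup>* = I\<close>. With the nonnegative matrices
  \<open>R = [[0,0],[\<epsilon>,1]]\<close>, \<open>T = [[1/\<epsilon>,1/\<epsilon>\<^sup>2],[0,0]]\<close>, \<open>P = [[0,1/\<epsilon>],[0,1]]\<close>, \<open>Q = [[\<epsilon>,0],[\<epsilon>\<^sup>2,\<epsilon>]]\<close>
  put \<open>A = S\<^sub>0\<^sup>* \<otimes> R + S\<^sub>1\<^sup>* \<otimes> T\<close> and \<open>B = S\<^sub>0 \<otimes> P + S\<^sub>1 \<otimes> Q\<close>. Then \<open>AB = I \<otimes> (RP + TQ)\<close>, and since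
  \<open>PT = 0\<close> and \<open>PR = QT\<close> also \<open>BA = I \<otimes> PR + S\<^sub>1 S\<^sub>0\<^sup>* \<otimes> QR\<close>. Hence \<open>AB - BA = I + N\<close> with
  \<open>N = I \<otimes> E - S\<^sub>1 S\<^sub>0\<^sup>* \<otimes> QR\<close>, \<open>E = [[0,0],[-\<epsilon>,0]]\<close>; as \<open>E\<^sup>2 = E QR = 0\<close> and \<open>(S\<^sub>1 S\<^sub>0\<^sup>*)\<^sup>2 = 0\<close>,
  \<open>N\<^sup>3 = 0\<close> while \<open>N\<^sup>2 = S\<^sub>1 S\<^sub>0\<^sup>* \<otimes> [[0,0],[\<epsilon>\<^sup>2,0]] \<noteq> 0\<close>. In coordinates each of \<open>A, B, N\<close> is a sum of a
  few weighted shifts with weights at most \<open>1/\<epsilon>\<^sup>2\<close>, \<open>1/\<epsilon>\<close> and \<open>\<epsilon>\<close> respectively, which gives the norm bounds.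
\<close>

lemma L2_set_le_l2_norm:
  assumes "x \<in> l2" and "finite A"
  shows "L2_set x A \<le> l2_norm x"
  using assms unfolding l2_def l2_norm_def L2_set_def
  by (simp add: sum_le_suminf)

lemma bounded_partial_L2_set_imp_l2:
  assumes partial: "\<And>k. L2_set y {..<k} \<le> c"
  shows "y \<in> l2" and "l2_norm y \<le> c"
proof -
  have "0 \<le> c" using partial[of 0] by simp
  have sums: "(\<Sum>n<k. (y n)\<^sup>2) \<le> c\<^sup>2" for k
    using partial[of k] by (simp add: L2_set_def sqrt_le_D)
  then have "summable (\<lambda>n. (y n)\<^sup>2)"
    by (intro summableI_nonneg_bounded) auto
  then show "y \<in> l2" by (simp add: l2_def)
  have "(\<Sum>n. (y n)\<^sup>2) \<le> c\<^sup>2"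
    by (rule suminf_le_const[OF \<open>summable _\<close> sums])
  then show "l2_norm y \<le> c"
    using \<open>0 \<le> c\<close> by (simp add: l2_norm_def real_le_lsqrt)
qed

definition l2_bounded :: "((nat \<Rightarrow> real) \<Rightarrow> nat \<Rightarrow> real) \<Rightarrow> real \<Rightarrow> bool" where
  "l2_bounded T C \<longleftrightarrow> (\<forall>x\<in>l2. T x \<in> l2 \<and> l2_norm (T x) \<le> C * l2_norm x)"

lemma l2_bounded_weighted_shift:
  assumes weight: "\<And>n. \<bar>w n\<bar> \<le> W" and inj: "inj_on f {n. w n \<noteq> 0}"
  shows "l2_bounded (\<lambda>x n. w n * x (f n)) W"
  unfolding l2_bounded_def
proof (intro ballI conjI)
  fix x assume x: "x \<in> l2"
  have "0 \<le> W" using weight[of 0] by linarith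
  have weight2: "(w n)\<^sup>2 \<le> W\<^sup>2" for n
    using weight[of n] by (metis abs_ge_zero power2_abs power_mono)
  have "L2_set (\<lambda>n. w n * x (f n)) {..<k} \<le> W * l2_norm x" for k
  proof -
    let ?S = "{n. n < k \<and> w n \<noteq> 0}"
    have "(\<Sum>n<k. (w n * x (f n))\<^sup>2) = (\<Sum>n\<in>?S. (w n * x (f n))\<^sup>2)"
      by (rule sum.mono_neutral_right) auto
    also have "\<dots> \<le> (\<Sum>n\<in>?S. W\<^sup>2 * (x (f n))\<^sup>2)"
      using weight2 by (intro sum_mono) (simp add: power_mult_distrib mult_right_mono)
    also have "\<dots> = W\<^sup>2 * (\<Sum>m\<in>f ` ?S. (x m)\<^sup>2)"
      using inj by (simp add: sum_distrib_left sum.reindex inj_on_def)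
    also have "\<dots> = (W * L2_set x (f ` ?S))\<^sup>2"
      by (simp add: L2_set_def power_mult_distrib sum_nonneg)
    finally have "L2_set (\<lambda>n. w n * x (f n)) {..<k} \<le> W * L2_set x (f ` ?S)"
      using \<open>0 \<le> W\<close> unfolding L2_set_def[of "\<lambda>n. w n * x (f n)"] by (simp add: real_le_lsqrt)
    also have "\<dots> \<le> W * l2_norm x"
      using \<open>0 \<le> W\<close> x by (simp add: L2_set_le_l2_norm mult_left_mono)
    finally show ?thesis .
  qed
  then show "(\<lambda>n. w n * x (f n)) \<in> l2" "l2_norm (\<lambda>n. w n * x (f n)) \<le> W * l2_norm x"
    by (rule bounded_partial_L2_set_imp_l2)+
qed

lemma l2_bounded_add:
  assumes T: "l2_bounded T a" and U: "l2_bounded U b"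
  shows "l2_bounded (\<lambda>x n. T x n + U x n) (a + b)"
  unfolding l2_bounded_def
proof (intro ballI conjI)
  fix x assume x: "x \<in> l2"
  have "L2_set (\<lambda>n. T x n + U x n) {..<k} \<le> (a + b) * l2_norm x" for k
  proof -
    have "L2_set (\<lambda>n. T x n + U x n) {..<k} \<le> L2_set (T x) {..<k} + L2_set (U x) {..<k}"
      by (rule L2_set_triangle_ineq)
    also have "\<dots> \<le> l2_norm (T x) + l2_norm (U x)"
      using T U x unfolding l2_bounded_def by (intro add_mono L2_set_le_l2_norm) auto
    also have "\<dots> \<le> (a + b) * l2_norm x"
      using T U x unfolding l2_bounded_def by (simp add: distrib_right add_mono)
    finally show ?thesis .
  qed
  then show "(\<lambda>n. T x n + U x n) \<in> l2" "l2_norm (\<lambda>n. T x n + U x n) \<le> (a + b) * l2_norm x"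
    by (rule bounded_partial_L2_set_imp_l2)+
qed

lemma l2_norm_nonneg: "x \<in> l2 \<Longrightarrow> 0 \<le> l2_norm x"
  by (simp add: l2_def l2_norm_def suminf_nonneg)

lemma l2_bounded_mono:
  assumes "l2_bounded T a" and "a \<le> b"
  shows "l2_bounded T b"
  using assms unfolding l2_bounded_def
  by (meson l2_norm_nonneg mult_right_mono order_trans)

lemma bounded_opI:
  assumes "\<And>x y. T (\<lambda>n. x n + y n) = (\<lambda>n. T x n + T y n)"
    and "\<And>x c. T (\<lambda>n. c * x n) = (\<lambda>n. c * T x n)"
    and "l2_bounded T C"
  shows "bounded_op T"
  using assms unfolding bounded_op_def l2_bounded_def by blast

lemma op_norm_le:
  assumes "l2_bounded T C" and "0 \<le> C"
  shows "op_norm T \<le> C"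
  unfolding op_norm_def
proof (rule cSup_least)
  have "(\<lambda>_. 0) \<in> l2" by (simp add: l2_def)
  then show "{l2_norm (T x) |x. x \<in> l2 \<and> l2_norm x \<le> 1} \<noteq> {}"
    by (auto simp: l2_norm_def)
next
  fix y assume "y \<in> {l2_norm (T x) |x. x \<in> l2 \<and> l2_norm x \<le> 1}"
  then obtain x where "x \<in> l2" "l2_norm x \<le> 1" "y = l2_norm (T x)" by auto
  with assms show "y \<le> C"
    unfolding l2_bounded_def by (metis mult_left_mono mult.right_neutral order_trans)
qed

lemma power_le_inverse_power:
  fixes e :: real
  assumes "0 < e" "e \<le> 1"
  shows "e ^ k \<le> 1 / e ^ n"
proof -
  have "e ^ k \<le> 1" using assms by (simp add: power_le_one)
  also have "1 \<le> 1 / e ^ n" using assms by (simp add: power_le_one)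
  finally show ?thesis .
qed

lemma inverse_power_le_inverse_power:
  fixes e :: real
  assumes "0 < e" "e \<le> 1" "k \<le> n"
  shows "1 / e ^ k \<le> 1 / e ^ n"
  using assms by (intro frac_le) (simp_all add: power_decreasing)

definition opA :: "real \<Rightarrow> (nat \<Rightarrow> real) \<Rightarrow> nat \<Rightarrow> real" where
  "opA e x n =
     (if even n then 1/e else 0) * x (2*n + 2) + (if even n then 1/e^2 else 0) * x (2*n + 3) +
     (if odd n then e else 0) * x (2*n - 2) + (if odd n then 1 else 0) * x (2*n - 1)"

definition opB :: "real \<Rightarrow> (nat \<Rightarrow> real) \<Rightarrow> nat \<Rightarrow> real" where
  "opB e x n =
     (if even n \<and> even (n div 2) then 1/e else 0) * x (n div 2 + 1) +
     (if odd n \<and> even (n div 2) then 1 else 0) * x (n div 2 + 1) +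
     (if even n \<and> odd (n div 2) then e else 0) * x (n div 2 - 1) +
     (if odd n \<and> odd (n div 2) then e^2 else 0) * x (n div 2 - 1) +
     (if odd n \<and> odd (n div 2) then e else 0) * x (n div 2)"

definition opN :: "real \<Rightarrow> (nat \<Rightarrow> real) \<Rightarrow> nat \<Rightarrow> real" where
  "opN e x n =
     (if odd n then -e else 0) * x (n - 1) +
     (if odd n \<and> odd (n div 2) then -e else 0) * x (n - 2) +
     (if odd n \<and> odd (n div 2) then -(e^2) else 0) * x (n - 3)"

lemma nat_mod4_cases:
  fixes n :: nat
  obtains q where "n = 4*q" | q where "n = 4*q + 1" | q where "n = 4*q + 2" | q where "n = 4*q + 3"
proof -
  have "n mod 4 = 0 \<or> n mod 4 = 1 \<or> n mod 4 = 2 \<or> n mod 4 = 3" by presburger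
  then show thesis using that div_mult_mod_eq[of n 4] by (metis add.right_neutral mult.commute)
qed

lemma opA_opB_commutator:
  assumes "e \<noteq> 0"
  shows "opA e (opB e x) n - opB e (opA e x) n = x n + opN e x n"
  using assms
  by (cases n rule: nat_mod4_cases)
     (simp_all add: opA_def opB_def opN_def div_plus_div_distrib_dvd_left div_plus_div_distrib_dvd_right,
      simp_all add: field_simps power2_eq_square, simp add: numeral_3_eq_3)

lemma opN_cube_eq_0: "opN e (opN e (opN e x)) n = 0"
  by (cases n rule: nat_mod4_cases)
     (simp_all add: opN_def div_plus_div_distrib_dvd_left div_plus_div_distrib_dvd_right)

lemma opN_square_unit_vector: "opN e (opN e (\<lambda>n. if n = 0 then 1 else 0)) 3 = e^2"
  by (simp add: opN_def power2_eq_square)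

lemma unit_vector_l2: "(\<lambda>n. if n = 0 then 1 else 0 :: real) \<in> l2"
proof -
  have "summable (\<lambda>n. (if n = 0 then 1 else 0 :: real)\<^sup>2)"
    by (rule summable_finite[of "{0}"]) auto
  then show ?thesis by (simp add: l2_def)
qed

lemma opA_l2_bounded:
  assumes "0 < e" "e \<le> 1"
  shows "l2_bounded (opA e) (5 / e^3)"
proof (rule l2_bounded_mono)
  show "l2_bounded (opA e) (1/e + 1/e^2 + e + 1)"
    unfolding opA_def using assms
    by (intro l2_bounded_add l2_bounded_weighted_shift) (auto simp: inj_on_def elim!: oddE)
  have "1/e^1 \<le> 1/e^3" "1/e^2 \<le> 1/e^3" "e^1 \<le> 1/e^3" "e^0 \<le> 1/e^3"
    using assms by (simp_all only: inverse_power_le_inverse_power power_le_inverse_power)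
  then show "1/e + 1/e^2 + e + 1 \<le> 5 / e^3" by simp
qed

lemma opB_l2_bounded:
  assumes "0 < e" "e \<le> 1"
  shows "l2_bounded (opB e) (5 / e^3)"
proof (rule l2_bounded_mono)
  show "l2_bounded (opB e) (1/e + 1 + e + e^2 + e)"
    unfolding opB_def using assms
    by (intro l2_bounded_add l2_bounded_weighted_shift) (auto simp: inj_on_def elim!: oddE evenE)
  have "1/e^1 \<le> 1/e^3" "e^0 \<le> 1/e^3" "e^1 \<le> 1/e^3" "e^2 \<le> 1/e^3"
    using assms by (simp_all only: inverse_power_le_inverse_power power_le_inverse_power)
  then show "1/e + 1 + e + e^2 + e \<le> 5 / e^3" by simp
qed

lemma opN_l2_bounded:
  assumes "0 < e" "e \<le> 1"
  shows "l2_bounded (opN e) (5 * e)"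
proof (rule l2_bounded_mono)
  show "l2_bounded (opN e) (e + e + e^2)"
    unfolding opN_def using assms
    by (intro l2_bounded_add l2_bounded_weighted_shift) (auto simp: inj_on_def elim!: oddE)
  show "e + e + e^2 \<le> 5 * e"
    using assms by (simp add: power2_eq_square mult_left_le)
qed

lemma opA_opB_opN_properties:
  assumes "0 < e" "e \<le> 1"
  shows "bounded_op (opA e) \<and> bounded_op (opB e) \<and> bounded_op (opN e) \<and>
    positive_op (opA e) \<and> positive_op (opB e) \<and>
    commutator_eq (opA e) (opB e) (opN e) \<and> nil_index3 (opN e) \<and>
    op_norm (opA e) \<le> 5 / e^3 \<and> op_norm (opB e) \<le> 5 / e^3 \<and> op_norm (opN e) \<le> 5 * e"
proof (intro conjI)
  show "bounded_op (opA e)"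
    by (rule bounded_opI[OF _ _ opA_l2_bounded[OF assms]]) (simp_all add: opA_def fun_eq_iff algebra_simps)
  show "bounded_op (opB e)"
    by (rule bounded_opI[OF _ _ opB_l2_bounded[OF assms]]) (simp_all add: opB_def fun_eq_iff algebra_simps)
  show "bounded_op (opN e)"
    by (rule bounded_opI[OF _ _ opN_l2_bounded[OF assms]]) (simp_all add: opN_def fun_eq_iff algebra_simps)
  show "positive_op (opA e)" "positive_op (opB e)"
    using assms by (auto simp: positive_op_def opA_def opB_def)
  show "commutator_eq (opA e) (opB e) (opN e)"
    using assms by (simp add: commutator_eq_def opA_opB_commutator)
  show "nil_index3 (opN e)"
    unfolding nil_index3_def using assms opN_square_unit_vector[of e]
    by (auto simp: opN_cube_eq_0 intro!: bexI[OF _ unit_vector_l2] exI[of _ 3])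
  show "op_norm (opA e) \<le> 5 / e^3" "op_norm (opB e) \<le> 5 / e^3" "op_norm (opN e) \<le> 5 * e"
    using assms by (auto intro!: op_norm_le opA_l2_bounded opB_l2_bounded opN_l2_bounded)
qed

theorem theorem3p2:
  shows "(\<exists>A B N. bounded_op A \<and> bounded_op B \<and> bounded_op N \<and>
            positive_op A \<and> positive_op B \<and> commutator_eq A B N \<and> nil_index3 N) \<and>
         (\<exists>K::real. K > 0 \<and>
            (\<forall>\<epsilon>::real. 0 < \<epsilon> \<and> \<epsilon> < 1 \<longrightarrow>
              (\<exists>A B N. bounded_op A \<and> bounded_op B \<and> bounded_op N \<and>
                 positive_op A \<and> positive_op B \<and> commutator_eq A B N \<and> nil_index3 N \<and>
                 op_norm A \<le> K / \<epsilon> ^ 3 \<and> op_norm B \<le> K / \<epsilon> ^ 3 \<and>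
                 op_norm N \<le> K * \<epsilon>)))"
proof
  show "\<exists>A B N. bounded_op A \<and> bounded_op B \<and> bounded_op N \<and>
          positive_op A \<and> positive_op B \<and> commutator_eq A B N \<and> nil_index3 N"
    using opA_opB_opN_properties[of 1] by auto
  show "\<exists>K::real. K > 0 \<and>
          (\<forall>\<epsilon>::real. 0 < \<epsilon> \<and> \<epsilon> < 1 \<longrightarrow>
            (\<exists>A B N. bounded_op A \<and> bounded_op B \<and> bounded_op N \<and>
               positive_op A \<and> positive_op B \<and> commutator_eq A B N \<and> nil_index3 N \<and>
               op_norm A \<le> K / \<epsilon> ^ 3 \<and> op_norm B \<le> K / \<epsilon> ^ 3 \<and> op_norm N \<le> K * \<epsilon>))"
    using opA_opB_opN_properties by (intro exI[of _ 5]) (simp, meson less_imp_le)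
qed

end
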